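(* Let $(X,\mathcal T,P,\leq,\{\sigma_x:x\in X\})$ be a typed topological space and $p\in P$. If $A\subseteq X$ is type-$p$-connected, then (1) $p\vdash CL_n(A)$ is type-$p$-connected for every integer $n>0$, and (2) $p\vdash tr(A)$ is type-$p$-connected.
   Context: A typed topological space $(X,\mathcal T,P,\leq,\{\sigma_x:x\in X\})$ consists of a topological space $(X,\mathcal T)$, a partially ordered set $(P,\leq)$ of types, and for each $x\in X$ a partial function $\sigma_x:\{O\in\mathcal T:x\in O\}\to P$ such that for all $U,V$ in its domain, $\sigma_x(U)\leq\sigma_x(V)$ iff $U\subseteq V$. $U$ is a type-$p$ neighborhood of $x$, written $p\vdash U(x)$, if $U$ is in the domain of $\sigma_x$ and $\sigma_x(U)=p$. $x$ is a $p$-accumulation point of $A$ if every type-$p$ neighborhood of $x$ meets $A$. $p\vdash CL_1(A)=A\cup\{p\text{-accumulation points of }A\}$, $p\vdash CL_n(A)=p\vdash CL_1(p\vdash CL_{n-1}(A))$, $p\vdash tr(A)=\bigcup_{n\ge1}p\vdash CL_n(A)$. A set $A\subseteq X$ is type-$p$-connected if there do not exist two families of type-$p$ neighborhoods $\{p\vdash U(x_i):i\in I\}$ and $\{p\vdash U(x_j):j\in J\}$ (each $U(x_k)$ a type-$p$ neighborhood of the point $x_k$) such that $I\neq\emptyset$, $J\neq\emptyset$, $A=\{x_i:i\in I\}\cup\{x_j:j\in J\}$, and $\left(\bigcup_{i\in I}U(x_i)\right)\cap\left(\bigcup_{j\in J}U(x_j)\right)=\emptyset$. *)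

theory Defs
  imports "HOL-Analysis.Analysis"
begin

text \<open>A typed topological space: topology T on X = topspace T, a poset (P, le)
  given as a carrier P and a partial order relation le on P, and for each point x
  a partial function sig x from open neighbourhoods of x to P (None = undefined).\<close>
definition typed_top_space ::
  "'a topology \<Rightarrow> 'p set \<Rightarrow> ('p \<times> 'p) set \<Rightarrow> ('a \<Rightarrow> 'a set \<Rightarrow> 'p option) \<Rightarrow> bool" where
  "typed_top_space T P le sig \<longleftrightarrow>
     partial_order_on P le \<and>
     (\<forall>x U q. sig x U = Some q \<longrightarrow> openin T U \<and> x \<in> U \<and> q \<in> P) \<and>
     (\<forall>x U V q r. sig x U = Some q \<and> sig x V = Some r \<longrightarrow> ((q, r) \<in> le \<longleftrightarrow> U \<subseteq> V))"

definition type_nbhd :: "('a \<Rightarrow> 'a set \<Rightarrow> 'p option) \<Rightarrow> 'p \<Rightarrow> 'a \<Rightarrow> 'a set \<Rightarrow> bool" where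
  "type_nbhd sig p x U \<longleftrightarrow> sig x U = Some p"

definition p_acc_point :: "('a \<Rightarrow> 'a set \<Rightarrow> 'p option) \<Rightarrow> 'p \<Rightarrow> 'a set \<Rightarrow> 'a \<Rightarrow> bool" where
  "p_acc_point sig p A x \<longleftrightarrow> (\<forall>U. type_nbhd sig p x U \<longrightarrow> U \<inter> A \<noteq> {})"

definition CL1 :: "'a topology \<Rightarrow> ('a \<Rightarrow> 'a set \<Rightarrow> 'p option) \<Rightarrow> 'p \<Rightarrow> 'a set \<Rightarrow> 'a set" where
  "CL1 T sig p A = A \<union> {x \<in> topspace T. p_acc_point sig p A x}"

text \<open>CLn T sig p n A; CLn .. 0 A = A so that CLn .. 1 A = CL1 A.\<close>
fun CLn :: "'a topology \<Rightarrow> ('a \<Rightarrow> 'a set \<Rightarrow> 'p option) \<Rightarrow> 'p \<Rightarrow> nat \<Rightarrow> 'a set \<Rightarrow> 'a set" where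
  "CLn T sig p 0 A = A"
| "CLn T sig p (Suc n) A = CL1 T sig p (CLn T sig p n A)"

definition tr :: "'a topology \<Rightarrow> ('a \<Rightarrow> 'a set \<Rightarrow> 'p option) \<Rightarrow> 'p \<Rightarrow> 'a set \<Rightarrow> 'a set" where
  "tr T sig p A = (\<Union>n\<in>{1..}. CLn T sig p n A)"

text \<open>Type-p-connectedness. The two families {p |- U(x_i) : i in I} and {p |- U(x_j) : j in J}
  are represented as the sets F, G of their (point, neighbourhood) pairs.\<close>
definition type_p_connected :: "('a \<Rightarrow> 'a set \<Rightarrow> 'p option) \<Rightarrow> 'p \<Rightarrow> 'a set \<Rightarrow> bool" where
  "type_p_connected sig p A \<longleftrightarrow>
     \<not> (\<exists>F G :: ('a \<times> 'a set) set.
          (\<forall>(x, U)\<in>F. type_nbhd sig p x U) \<and> (\<forall>(x, U)\<in>G. type_nbhd sig p x U) \<and>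
          F \<noteq> {} \<and> G \<noteq> {} \<and>
          A = fst ` F \<union> fst ` G \<and>
          (\<Union>(snd ` F)) \<inter> (\<Union>(snd ` G)) = {})"

end

theory Submission
  imports Defs
begin

text \<open>A separation of CL1 A cannot keep one of its sides away from A: a point on that side
  outside A is a p-accumulation point of A, so its type-p neighbourhood meets A in a point of
  the other side, whose own neighbourhood contains it. Hence a separation of CL1 A would
  induce one of A. The set tr A is the union of the increasing chain of the connected sets
  CLn n A, and any two of its points already lie in one of them.\<close>

definition type_p_separation ::
  "('a \<Rightarrow> 'a set \<Rightarrow> 'p option) \<Rightarrow> 'p \<Rightarrow> ('a \<times> 'a set) set \<Rightarrow> ('a \<times> 'a set) set \<Rightarrow> bool" where
  "type_p_separation sig p F G \<longleftrightarrow>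
     (\<forall>(x, U)\<in>F. type_nbhd sig p x U) \<and> (\<forall>(x, U)\<in>G. type_nbhd sig p x U) \<and>
     (\<Union>(snd ` F)) \<inter> (\<Union>(snd ` G)) = {}"

lemma type_p_connected_iff_no_separation:
  "type_p_connected sig p A \<longleftrightarrow>
     \<not> (\<exists>F G. type_p_separation sig p F G \<and> F \<noteq> {} \<and> G \<noteq> {} \<and> A = fst ` F \<union> fst ` G)"
  unfolding type_p_connected_def type_p_separation_def by blast

lemma type_p_separation_commute:
  "type_p_separation sig p F G \<longleftrightarrow> type_p_separation sig p G F"
  unfolding type_p_separation_def by blast

lemma type_nbhd_mem:
  assumes "typed_top_space T P le sig" and "type_nbhd sig p x U"
  shows "x \<in> U"
  using assms unfolding typed_top_space_def type_nbhd_def by blast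

lemma type_p_connected_subset_separation:
  assumes "type_p_connected sig p A" and sep: "type_p_separation sig p F G"
    and "A \<subseteq> fst ` F \<union> fst ` G"
    and "a \<in> A" "a \<in> fst ` F" and "b \<in> A" "b \<in> fst ` G"
  shows False
proof -
  let ?F = "{z\<in>F. fst z \<in> A}" and ?G = "{z\<in>G. fst z \<in> A}"
  have "type_p_separation sig p ?F ?G"
    using sep unfolding type_p_separation_def by blast
  moreover have "?F \<noteq> {}" "?G \<noteq> {}" "A = fst ` ?F \<union> fst ` ?G"
    using assms(3-) by auto
  ultimately show False
    using assms(1) unfolding type_p_connected_iff_no_separation by blast
qed

lemma type_p_connectedI_pairwise:
  assumes "\<And>a b. a \<in> S \<Longrightarrow> b \<in> S \<Longrightarrow> \<exists>C\<subseteq>S. a \<in> C \<and> b \<in> C \<and> type_p_connected sig p C"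
  shows "type_p_connected sig p S"
  unfolding type_p_connected_iff_no_separation
proof clarify
  fix F G assume sep: "type_p_separation sig p F G" and "F \<noteq> {}" "G \<noteq> {}"
    and S: "S = fst ` F \<union> fst ` G"
  then obtain a b where a: "a \<in> fst ` F" and b: "b \<in> fst ` G" by blast
  with S assms obtain C where "C \<subseteq> S" "a \<in> C" "b \<in> C" "type_p_connected sig p C"
    by blast
  with S sep a b show False
    by (metis type_p_connected_subset_separation)
qed

lemma CL1_separation_meets_base:
  assumes ts: "typed_top_space T P le sig" and sep: "type_p_separation sig p F G"
    and CL1: "CL1 T sig p A = fst ` F \<union> fst ` G" and "G \<noteq> {}"
  shows "A \<inter> fst ` G \<noteq> {}"
proof
  assume disj: "A \<inter> fst ` G = {}"
  obtain y V where yV: "(y, V) \<in> G" using \<open>G \<noteq> {}\<close> by auto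
  then have "y \<in> CL1 T sig p A" "y \<notin> A" using CL1 disj by force+
  then have "p_acc_point sig p A y" unfolding CL1_def by auto
  moreover have "type_nbhd sig p y V" using sep yV unfolding type_p_separation_def by auto
  ultimately obtain a where a: "a \<in> V" "a \<in> A" unfolding p_acc_point_def by blast
  have "A \<subseteq> CL1 T sig p A" unfolding CL1_def by blast
  with a CL1 disj have "a \<in> fst ` F" by blast
  then obtain U where aU: "(a, U) \<in> F" by force
  then have "a \<in> U"
    using sep ts type_nbhd_mem unfolding type_p_separation_def by fastforce
  then show False using sep a aU yV unfolding type_p_separation_def by force
qed

lemma type_p_connected_CL1:
  assumes ts: "typed_top_space T P le sig" and conn: "type_p_connected sig p A"
  shows "type_p_connected sig p (CL1 T sig p A)"
  unfolding type_p_connected_iff_no_separation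
proof clarify
  fix F G assume sep: "type_p_separation sig p F G" and "F \<noteq> {}" "G \<noteq> {}"
    and CL1: "CL1 T sig p A = fst ` F \<union> fst ` G"
  have "A \<inter> fst ` G \<noteq> {}"
    using CL1_separation_meets_base[OF ts sep CL1 \<open>G \<noteq> {}\<close>] .
  moreover have "A \<inter> fst ` F \<noteq> {}"
    using CL1_separation_meets_base[OF ts _ _ \<open>F \<noteq> {}\<close>] sep CL1
    by (metis sup_commute type_p_separation_commute)
  moreover have "A \<subseteq> fst ` F \<union> fst ` G"
    using CL1 unfolding CL1_def by auto
  ultimately show False
    using type_p_connected_subset_separation[OF conn sep] by blast
qed

lemma type_p_connected_CLn:
  assumes "typed_top_space T P le sig" and "type_p_connected sig p A"
  shows "type_p_connected sig p (CLn T sig p n A)"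
  by (induction n) (simp_all add: assms(2) type_p_connected_CL1[OF assms(1)])

lemma CLn_mono: "m \<le> n \<Longrightarrow> CLn T sig p m A \<subseteq> CLn T sig p n A"
proof (induction n)
  case (Suc n)
  then show ?case by (cases "m = Suc n") (auto simp: CL1_def)
qed simp

lemma type_p_connected_tr:
  assumes "typed_top_space T P le sig" and "type_p_connected sig p A"
  shows "type_p_connected sig p (tr T sig p A)"
proof (rule type_p_connectedI_pairwise)
  fix a b assume "a \<in> tr T sig p A" "b \<in> tr T sig p A"
  then obtain m k where "a \<in> CLn T sig p m A" "b \<in> CLn T sig p k A"
    unfolding tr_def by blast
  moreover define n where "n = Suc (max m k)"
  moreover have "m \<le> n" "k \<le> n" unfolding n_def by simp_all
  ultimately have "a \<in> CLn T sig p n A" "b \<in> CLn T sig p n A"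
    using CLn_mono[of _ n T sig p A] by blast+
  moreover have "CLn T sig p n A \<subseteq> tr T sig p A"
    unfolding tr_def n_def by force
  ultimately show "\<exists>C\<subseteq>tr T sig p A. a \<in> C \<and> b \<in> C \<and> type_p_connected sig p C"
    using type_p_connected_CLn[OF assms] by blast
qed

theorem lemma2p13:
  fixes T :: "'a topology" and P :: "'p set" and le :: "('p \<times> 'p) set"
    and sig :: "'a \<Rightarrow> 'a set \<Rightarrow> 'p option" and p :: 'p and A :: "'a set"
  assumes "typed_top_space T P le sig"
    and "p \<in> P"
    and "A \<subseteq> topspace T"
    and "type_p_connected sig p A"
  shows "(\<forall>n::nat. n > 0 \<longrightarrow> type_p_connected sig p (CLn T sig p n A))
         \<and> type_p_connected sig p (tr T sig p A)"
  using type_p_connected_CLn[OF assms(1,4)] type_p_connected_tr[OF assms(1,4)] by blast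

end
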